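(* Let $p>q>1$ be relatively prime integers. Let $\mathbf{x}$ be a $\frac pq$-automatic sequence over a finite alphabet $B$ generated by a deterministic finite automaton with output $\mathcal{A}=(Q,q_0,A_p,\delta,\tau:Q\to B)$ with the following property: there exists an integer $h\ge0$ such that for all words $u,v\in L_{\frac pq}$ with $\mathrm{val}_{\frac pq}(u)\equiv\mathrm{val}_{\frac pq}(v)\pmod{q^h}$ and $\delta(q_0,u)\ne\delta(q_0,v)$, there exists a word $w\in u^{-1}L_{\frac pq}\cap A_p^{\le h}$ such that $\tau(\delta(q_0,uw))\ne\tau(\delta(q_0,vw))$. Then, in the tree $T(L_{\frac pq})$ decorated by $\mathbf{x}$, each factor in $F_h^\infty$ can be extended to at most one factor in $F^\infty_{h+1,w_{j,0}}$, for every $0\le j\le q-1$.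
   Context: $A_p=\{0,\ldots,p-1\}$; for $w=w_\ell\cdots w_0\in A_p^*$, $\mathrm{val}_{\frac pq}(w)=\sum_{i=0}^{\ell}\frac{w_i}{q}(\frac pq)^i$; $\mathrm{rep}_{\frac pq}(n)$ is the unique word not starting with $0$ of value $n$ ($\mathrm{rep}_{\frac pq}(0)=\varepsilon$); $L_{\frac pq}=\{\mathrm{rep}_{\frac pq}(n):n\ge0\}$; $w^{-1}L=\{u:wu\in L\}$. $\mathbf{x}$ is generated by $\mathcal{A}$ if $x_n=\tau(\delta(q_0,\mathrm{rep}_{\frac pq}(n)))$ for all $n$. $T(L_{\frac pq})$ is the tree whose nodes are the words of $L_{\frac pq}$, with an edge labeled $d$ from $w$ to $wd$ whenever both are in $L_{\frac pq}$; node $w$ is decorated by $x_{\mathrm{val}_{\frac pq}(w)}$. For $w\in L_{\frac pq}$, the factor $T[w,h]$ of height $h$ has domain $w^{-1}L_{\frac pq}\cap A_p^{\le h}$, with node $u$ decorated by $x_{\mathrm{val}_{\frac pq}(wu)}$; two factors of the same height are equal if they have the same domain and the same decorations. $F_h$ is the set of factors of height $h$; $F_h^\infty\subseteq F_h$ is the set of those equal to $T[w,h]$ for infinitely many $w\in L_{\frac pq}$. For a letter $a$, $F^\infty_{h,a}$ is the set of factors in $F^\infty_h$ whose radix-least word of length $h$ in the domain ends with $a$. A factor $U$ of height $h$ is extended to a factor $U'$ of height $h+1$ if the truncation of $U'$ to words of length at most $h$ (same decorations) equals $U$. For $0\le j\le q-1$, $w_j$ is the word listing in increasing order the letters $a\in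 A_p$ with $a\equiv -pj\pmod q$ (so that $(w_0,\ldots,w_{q-1})$ is the periodic labeled signature of $T(L_{\frac pq})$), and $w_{j,0}$ is its first letter. *)

theory Defs
  imports Complex_Main "HOL-Number_Theory.Cong"
begin

(* Words over A_p are lists of naturals, written most significant digit first:
   the list [w_l, ..., w_0] represents w = w_l ... w_0. *)

definition alph :: "nat \<Rightarrow> nat set" where
  "alph p = {0..<p}"

definition val :: "nat \<Rightarrow> nat \<Rightarrow> nat list \<Rightarrow> rat" where
  "val p q w = (\<Sum>i<length w. (of_nat (rev w ! i) / of_nat q) * (of_nat p / of_nat q) ^ i)"

definition rep :: "nat \<Rightarrow> nat \<Rightarrow> nat \<Rightarrow> nat list" where
  "rep p q n = (THE w. set w \<subseteq> alph p \<and> (w = [] \<or> hd w \<noteq> 0) \<and> val p q w = of_nat n)"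

definition L :: "nat \<Rightarrow> nat \<Rightarrow> nat list set" where
  "L p q = range (rep p q)"

definition delta_star :: "('s \<Rightarrow> nat \<Rightarrow> 's) \<Rightarrow> 's \<Rightarrow> nat list \<Rightarrow> 's" where
  "delta_star \<delta> s w = foldl \<delta> s w"

definition generated_by ::
  "nat \<Rightarrow> nat \<Rightarrow> (nat \<Rightarrow> 'b) \<Rightarrow> 's set \<Rightarrow> 's \<Rightarrow> ('s \<Rightarrow> nat \<Rightarrow> 's) \<Rightarrow> ('s \<Rightarrow> 'b) \<Rightarrow> bool" where
  "generated_by p q x Q q0 \<delta> \<tau> \<longleftrightarrow>
     finite Q \<and> q0 \<in> Q \<and> (\<forall>s\<in>Q. \<forall>a\<in>alph p. \<delta> s a \<in> Q) \<and>
     (\<forall>n. x n = \<tau> (delta_star \<delta> q0 (rep p q n)))"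

definition nval :: "nat \<Rightarrow> nat \<Rightarrow> nat list \<Rightarrow> nat" where
  "nval p q w = nat \<lfloor>val p q w\<rfloor>"

(* factor T[w,h] of the tree T(L_{p/q}) decorated by x, encoded as a partial map:
   its domain is w^{-1}L \<inter> A_p^{\<le>h}, and node u carries x_{val(wu)} *)
definition factor :: "nat \<Rightarrow> nat \<Rightarrow> (nat \<Rightarrow> 'b) \<Rightarrow> nat list \<Rightarrow> nat \<Rightarrow> nat list \<Rightarrow> 'b option" where
  "factor p q x w h = (\<lambda>u. if w @ u \<in> L p q \<and> set u \<subseteq> alph p \<and> length u \<le> h
                              then Some (x (nval p q (w @ u))) else None)"

definition F :: "nat \<Rightarrow> nat \<Rightarrow> (nat \<Rightarrow> 'b) \<Rightarrow> nat \<Rightarrow> (nat list \<Rightarrow> 'b option) set" where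
  "F p q x h = {factor p q x w h | w. w \<in> L p q}"

definition F_inf :: "nat \<Rightarrow> nat \<Rightarrow> (nat \<Rightarrow> 'b) \<Rightarrow> nat \<Rightarrow> (nat list \<Rightarrow> 'b option) set" where
  "F_inf p q x h = {U \<in> F p q x h. infinite {w \<in> L p q. factor p q x w h = U}}"

definition radix_le :: "nat list \<Rightarrow> nat list \<Rightarrow> bool" where
  "radix_le u v \<longleftrightarrow> length u < length v \<or>
     (length u = length v \<and> (u = v \<or> (u, v) \<in> lexord {(a, b). a < b}))"

definition F_inf_letter :: "nat \<Rightarrow> nat \<Rightarrow> (nat \<Rightarrow> 'b) \<Rightarrow> nat \<Rightarrow> nat \<Rightarrow> (nat list \<Rightarrow> 'b option) set" where
  "F_inf_letter p q x h a = {U \<in> F_inf p q x h.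
      \<exists>u. U u \<noteq> None \<and> length u = h \<and>
          (\<forall>v. U v \<noteq> None \<and> length v = h \<longrightarrow> radix_le u v) \<and>
          u \<noteq> [] \<and> last u = a}"

definition extends :: "nat \<Rightarrow> (nat list \<Rightarrow> 'b option) \<Rightarrow> (nat list \<Rightarrow> 'b option) \<Rightarrow> bool" where
  "extends h U U' \<longleftrightarrow> (\<lambda>u. if length u \<le> h then U' u else None) = U"

(* w_j: letters a of A_p with a = -pj (mod q), in increasing order; w_{j,0} its first letter *)
definition sigword :: "nat \<Rightarrow> nat \<Rightarrow> nat \<Rightarrow> nat list" where
  "sigword p q j = filter (\<lambda>a. [int a = - (int p * int j)] (mod int q)) [0..<p]"

definition sigfirst :: "nat \<Rightarrow> nat \<Rightarrow> nat \<Rightarrow> nat" where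
  "sigfirst p q j = hd (sigword p q j)"

end

theory Submission
  imports Defs
begin

text \<open>
  The words of \<open>L\<^sub>p\<^sub>/\<^sub>q\<close> are exactly the words without leading zero whose value is an
  integer. Hence, for nonempty \<open>u, v \<in> L\<close> with \<open>u w \<in> L\<close>, also \<open>v w \<in> L\<close> iff
  \<open>(val u - val v) (p/q)\<^bsup>|w|\<^esup>\<close> is an integer, i.e. (by coprimality) iff
  \<open>val u \<equiv> val v (mod q\<^bsup>|w|\<^esup>)\<close>.

  Let two factors \<open>T[u,h+1]\<close>, \<open>T[v,h+1]\<close> of \<open>F\<^sup>\<infinity>\<^sub>h\<^sub>+\<^sub>1\<^sub>,\<^sub>a\<close> extend the same factor of
  height \<open>h\<close>. Their nodes of height \<open>h\<close> coincide and every node has a child, so their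
  radix-least words of length \<open>h+1\<close> share the prefix of length \<open>h\<close>; as both end in \<open>a\<close>,
  they are equal. So \<open>u\<close> and \<open>v\<close> have a common extension of length \<open>h+1\<close>, whence
  \<open>val u \<equiv> val v (mod q\<^bsup>h+1\<^esup>)\<close> and the two factors have the same domain. If \<open>u\<close> and \<open>v\<close>
  led to different states, the hypothesis on the automaton would give a word of length at
  most \<open>h\<close> on which the common factor of height \<open>h\<close> carries two different decorations.
  So the states agree, and with them all decorations.
\<close>

lemma val_Nil [simp]: "val p q [] = 0"
  by (simp add: val_def)

lemma val_snoc: "val p q (w @ [a]) = (of_nat p * val p q w + of_nat a) / of_nat q"
proof -
  have "val p q (w @ [a]) =
      of_nat a / of_nat q + (\<Sum>i<length w. (of_nat (rev w ! i) / of_nat q) * (of_nat p / of_nat q) ^ Suc i)"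
    by (simp add: val_def sum.lessThan_Suc_shift del: sum.lessThan_Suc)
  also have "\<dots> = of_nat a / of_nat q + (of_nat p / of_nat q) * val p q w"
    by (simp add: val_def sum_distrib_left mult_ac)
  finally show ?thesis
    by (simp add: add_divide_distrib)
qed

lemma val_append: "val p q (u @ w) = val p q u * (of_nat p / of_nat q) ^ length w + val p q w"
proof (induction w rule: rev_induct)
  case (snoc a w)
  then show ?case
    by (simp add: val_snoc append_assoc[symmetric] del: append_assoc)
       (simp add: add_divide_distrib distrib_left)
qed simp

lemma val_nonneg: "val p q w \<ge> 0"
  by (simp add: val_def sum_nonneg)

lemma val_pos:
  assumes "q > 0" "p > 0" "w \<noteq> []" "hd w \<noteq> 0"
  shows "val p q w > 0"
proof -
  obtain b v where w: "w = [b] @ v" and "b > 0"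
    using assms(3,4) by (cases w) auto
  then have "val p q [b] > 0"
    using assms(1) val_snoc[of p q "[]" b] by simp
  then show ?thesis
    using assms val_nonneg[of p q v] unfolding w val_append by (simp add: add_pos_nonneg)
qed

lemma val_scaled_in_Ints:
  assumes "q > 0"
  shows "of_nat q ^ length w * val p q w \<in> \<int>"
proof (induction w rule: rev_induct)
  case (snoc a w)
  then obtain i where "of_nat q ^ length w * val p q w = of_int i"
    by (auto elim: Ints_cases)
  then have "of_nat q ^ length (w @ [a]) * val p q (w @ [a]) = of_int (int p * i + int q ^ length w * int a)"
    using assms by (simp add: val_snoc field_simps)
  then show ?case
    by simp
qed simp

lemma in_Ints_if_coprime_multiples:
  fixes r :: rat
  assumes "coprime p q" "p > 0" "of_nat q ^ k * r \<in> \<int>" "of_nat p * r \<in> \<int>"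
  shows "r \<in> \<int>"
proof -
  obtain X Y where X: "of_nat q ^ k * r = of_int X" and Y: "of_nat p * r = of_int Y"
    using assms(3,4) by (auto elim!: Ints_cases)
  have "of_int (int p * X) = (of_int (int q ^ k * Y) :: rat)"
    by (simp flip: X Y)
  then have "int p * X = int q ^ k * Y"
    by (simp only: of_int_eq_iff)
  moreover have "coprime (int p) (int q ^ k)"
    using assms(1) by simp
  ultimately have "int p dvd Y"
    by (metis coprime_dvd_mult_right_iff dvd_triv_left)
  then obtain c where "Y = int p * c" ..
  then have "r = of_int c"
    using Y assms(2) by simp
  then show ?thesis
    by simp
qed

lemma val_butlast_in_Ints:
  assumes "coprime p q" "p > 0" "q > 0" "val p q (w @ [a]) \<in> \<int>"
  shows "val p q w \<in> \<int>"
proof -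
  obtain n where "val p q (w @ [a]) = of_int n"
    using assms(4) by (auto elim: Ints_cases)
  then have "of_nat p * val p q w = of_int (int q * n - int a)"
    using assms(3) by (simp add: val_snoc field_simps)
  then show ?thesis
    using in_Ints_if_coprime_multiples[OF assms(1,2) val_scaled_in_Ints[OF assms(3)]] by simp
qed

lemma int_mult_ratio_power_in_Ints_iff:
  assumes "coprime p q" "q > 0"
  shows "of_int d * (of_nat p / of_nat q) ^ k \<in> (\<int> :: rat set) \<longleftrightarrow> int q ^ k dvd d"
proof
  assume "of_int d * (of_nat p / of_nat q) ^ k \<in> (\<int> :: rat set)"
  then obtain i where "of_int d * (of_nat p / of_nat q) ^ k = (of_int i :: rat)"
    by (auto elim: Ints_cases)
  then have "of_int (d * int p ^ k) = (of_int (i * int q ^ k) :: rat)"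
    using assms(2) by (simp add: power_divide field_simps)
  then have "int q ^ k dvd d * int p ^ k"
    by (metis dvd_triv_right of_int_eq_iff)
  moreover have "coprime (int q ^ k) (int p ^ k)"
    using assms(1) by (simp add: coprime_commute)
  ultimately show "int q ^ k dvd d"
    by (simp add: coprime_dvd_mult_left_iff)
next
  assume "int q ^ k dvd d"
  then obtain c where "d = int q ^ k * c" ..
  then have "of_int d * (of_nat p / of_nat q) ^ k = (of_int (c * int p ^ k) :: rat)"
    using assms(2) by (simp add: power_divide field_simps)
  then show "of_int d * (of_nat p / of_nat q) ^ k \<in> (\<int> :: rat set)"
    by simp
qed

definition normal_word :: "nat \<Rightarrow> nat list \<Rightarrow> bool" where
  "normal_word p w \<longleftrightarrow> set w \<subseteq> alph p \<and> (w = [] \<or> hd w \<noteq> 0)"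

lemma normal_word_butlast:
  "normal_word p (w @ [a]) \<Longrightarrow> normal_word p w"
  by (cases w) (auto simp: normal_word_def)

lemma normal_word_exists:
  assumes "0 < q" "q < p"
  shows "\<exists>w. normal_word p w \<and> val p q w = of_nat n"
proof (induction n rule: less_induct)
  case (less n)
  show ?case
  proof (cases "n = 0")
    case True
    then show ?thesis
      by (auto simp: normal_word_def intro: exI[of _ "[]"])
  next
    case False
    define a where "a = (q * n) mod p"
    define m where "m = (q * n) div p"
    have qn: "q * n = p * m + a" and "a < p"
      using assms unfolding a_def m_def by simp_all
    have "m < n"
      using False assms unfolding m_def by (simp add: div_less_iff_less_mult mult.commute)
    then obtain w where w: "normal_word p w" "val p q w = of_nat m"
      using less by blast
    have "val p q (w @ [a]) = of_nat n"
    proof -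
      have "(of_nat p * of_nat m + of_nat a :: rat) = of_nat (q * n)"
        by (simp only: qn of_nat_add of_nat_mult)
      then show ?thesis
        using w(2) assms(1) by (simp add: val_snoc)
    qed
    moreover have "normal_word p (w @ [a])"
    proof (cases "w = []")
      case True
      then have "a = q * n"
        using w(2) qn by simp
      then show ?thesis
        using True False \<open>a < p\<close> assms by (simp add: normal_word_def alph_def)
    qed (use w(1) \<open>a < p\<close> in \<open>auto simp: normal_word_def alph_def\<close>)
    ultimately show ?thesis
      by blast
  qed
qed

text \<open>If \<open>val (w a) = N\<close> then \<open>q N = p val w + a\<close> with \<open>val w\<close> an integer, so the last
  digit \<open>a\<close> is determined by \<open>N\<close> as \<open>q N mod p\<close>.\<close>

lemma normal_word_val_inj:
  assumes "coprime p q" "p > 0" "q > 0"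
  shows "normal_word p w \<Longrightarrow> normal_word p w' \<Longrightarrow> val p q w = val p q w' \<Longrightarrow> val p q w \<in> \<int> \<Longrightarrow> w = w'"
proof (induction w arbitrary: w' rule: rev_induct)
  case Nil
  show ?case
  proof (rule ccontr)
    assume "[] \<noteq> w'"
    then have "val p q w' > 0"
      using val_pos[OF assms(3,2), of w'] Nil.prems(2) by (auto simp: normal_word_def)
    then show False
      using Nil.prems(3) by simp
  qed
next
  case (snoc a w)
  have "w' \<noteq> []"
    using val_pos[OF assms(3,2), of "w @ [a]"] snoc.prems by (auto simp: normal_word_def)
  then obtain v b where w': "w' = v @ [b]"
    by (metis rev_exhaust)
  have "val p q w \<in> \<int>" "val p q v \<in> \<int>"
    using val_butlast_in_Ints[OF assms] snoc.prems w' by metis+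
  then obtain i j where i: "val p q w = of_int i" and j: "val p q v = of_int j"
    by (auto elim!: Ints_cases)
  have "of_int (int p * i + int a) = (of_int (int p * j + int b) :: rat)"
    using snoc.prems(3) w' i j assms(3) by (simp add: val_snoc)
  then have e: "int p * i + int a = int p * j + int b"
    by (simp only: of_int_eq_iff)
  have "a < p" "b < p"
    using snoc.prems(1,2) w' by (auto simp: normal_word_def alph_def)
  then have "int a = (int p * i + int a) mod int p"
    by simp
  also have "\<dots> = (int p * j + int b) mod int p"
    by (simp only: e)
  also have "\<dots> = int b"
    using \<open>b < p\<close> by simp
  finally have "a = b"
    by simp
  then have "val p q w = val p q v"
    using e i j assms(2) by simp
  moreover have "normal_word p w" "normal_word p v"
    using snoc.prems(1,2) w' normal_word_butlast by blast+
  ultimately have "w = v"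
    using snoc.IH \<open>val p q w \<in> \<int>\<close> by blast
  then show ?case
    using \<open>a = b\<close> w' by simp
qed

locale rational_base =
  fixes p q :: nat
  assumes one_less_q: "1 < q" and q_less_p: "q < p" and coprime_p_q: "coprime p q"
begin

lemma q_pos: "0 < q"
  using one_less_q by simp

lemma p_pos: "0 < p"
  using one_less_q q_less_p by simp

lemma rep_spec: "normal_word p (rep p q n) \<and> val p q (rep p q n) = of_nat n"
proof -
  have "\<exists>!w. normal_word p w \<and> val p q w = of_nat n"
    using normal_word_exists[OF q_pos q_less_p]
      normal_word_val_inj[OF coprime_p_q p_pos q_pos]
    by (metis Ints_of_nat)
  from theI'[OF this] show ?thesis
    unfolding rep_def normal_word_def by (simp add: conj_assoc)
qed

lemma L_iff: "w \<in> L p q \<longleftrightarrow> normal_word p w \<and> val p q w \<in> \<int>"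
proof
  assume "w \<in> L p q"
  then show "normal_word p w \<and> val p q w \<in> \<int>"
    unfolding L_def using rep_spec by auto
next
  assume w: "normal_word p w \<and> val p q w \<in> \<int>"
  then obtain n where "val p q w = of_int n"
    by (auto elim: Ints_cases)
  moreover have "n \<ge> 0"
    using val_nonneg[of p q w] calculation by simp
  ultimately have "val p q w = of_nat (nat n)"
    by simp
  then have "w = rep p q (nat n)"
    using normal_word_val_inj[OF coprime_p_q p_pos q_pos, of w "rep p q (nat n)"] w rep_spec by simp
  then show "w \<in> L p q"
    unfolding L_def by simp
qed

lemma rep_nval: "w \<in> L p q \<Longrightarrow> rep p q (nval p q w) = w"
  unfolding L_def nval_def using rep_spec by auto

lemma val_eq_nval: "w \<in> L p q \<Longrightarrow> val p q w = of_nat (nval p q w)"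
  by (metis rep_spec rep_nval)

lemma append_in_L_iff:
  assumes "u \<in> L p q" "u \<noteq> []"
  shows "u @ w \<in> L p q \<longleftrightarrow> set w \<subseteq> alph p \<and> val p q (u @ w) \<in> \<int>"
  using assms by (auto simp: L_iff normal_word_def)

lemma L_prefix_closed: "u @ w \<in> L p q \<Longrightarrow> u \<in> L p q"
proof (induction w rule: rev_induct)
  case (snoc a w)
  have "normal_word p ((u @ w) @ [a])" "val p q ((u @ w) @ [a]) \<in> \<int>"
    using snoc.prems by (simp_all add: L_iff)
  then have "u @ w \<in> L p q"
    using val_butlast_in_Ints[OF coprime_p_q p_pos q_pos] normal_word_butlast by (simp add: L_iff)
  then show ?case
    by (rule snoc.IH)
qed simp

lemma L_snoc_exists:
  assumes "w \<in> L p q"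
  shows "\<exists>b. w @ [b] \<in> L p q"
proof (cases "w = []")
  case True
  have "val p q [q] = 1"
    using val_snoc[of p q "[]" q] q_pos by simp
  then have "[q] \<in> L p q"
    using q_pos q_less_p by (simp add: L_iff normal_word_def alph_def)
  then show ?thesis
    using True by auto
next
  case False
  define n where "n = int (nval p q w)"
  define r where "r = (- (int p * n)) mod int q"
  have r: "0 \<le> r" "r < int q"
    using q_pos unfolding r_def by simp_all
  have "(int p * n + r) mod int q = 0"
    unfolding r_def by (simp add: mod_add_right_eq)
  then obtain c where c: "int p * n + r = int q * c"
    by (auto elim!: dvdE simp: mod_eq_0_iff_dvd)
  have "of_nat q * val p q (w @ [nat r]) = of_nat p * val p q w + of_int r"
    using q_pos r(1) by (simp add: val_snoc)
  also have "\<dots> = of_int (int p * n + r)"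
    using val_eq_nval[OF assms] by (simp add: n_def)
  also have "\<dots> = of_nat q * of_int c"
    by (simp add: c)
  finally have "val p q (w @ [nat r]) = of_int c"
    using q_pos by simp
  moreover have "nat r \<in> alph p"
    using r q_less_p by (simp add: alph_def)
  ultimately have "w @ [nat r] \<in> L p q"
    using append_in_L_iff[OF assms False] by simp
  then show ?thesis ..
qed

lemma append_in_L_iff_cong:
  assumes u: "u \<in> L p q" "u \<noteq> []" and v: "v \<in> L p q" "v \<noteq> []" and uw: "u @ w \<in> L p q"
  shows "v @ w \<in> L p q \<longleftrightarrow> [nval p q u = nval p q v] (mod q ^ length w)"
proof -
  define d where "d = int (nval p q u) - int (nval p q v)"
  have alph: "set w \<subseteq> alph p" and uw_Ints: "val p q (u @ w) \<in> \<int>"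
    using append_in_L_iff[OF u] uw by simp_all
  have diff: "of_int d * (of_nat p / of_nat q) ^ length w = val p q (u @ w) - val p q (v @ w)"
    using val_eq_nval[OF u(1)] val_eq_nval[OF v(1)] by (simp add: val_append d_def algebra_simps)
  have "v @ w \<in> L p q \<longleftrightarrow> val p q (v @ w) \<in> \<int>"
    using append_in_L_iff[OF v] alph by simp
  also have "\<dots> \<longleftrightarrow> of_int d * (of_nat p / of_nat q) ^ length w \<in> (\<int> :: rat set)"
  proof
    assume "val p q (v @ w) \<in> \<int>"
    with uw_Ints show "of_int d * (of_nat p / of_nat q) ^ length w \<in> (\<int> :: rat set)"
      unfolding diff by (rule Ints_diff)
  next
    assume "of_int d * (of_nat p / of_nat q) ^ length w \<in> (\<int> :: rat set)"
    with uw_Ints have "val p q (u @ w) - (val p q (u @ w) - val p q (v @ w)) \<in> \<int>"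
      unfolding diff by (rule Ints_diff)
    then show "val p q (v @ w) \<in> \<int>"
      by simp
  qed
  also have "\<dots> \<longleftrightarrow> int q ^ length w dvd d"
    by (rule int_mult_ratio_power_in_Ints_iff[OF coprime_p_q q_pos])
  also have "\<dots> \<longleftrightarrow> [nval p q u = nval p q v] (mod q ^ length w)"
    unfolding cong_int_iff[symmetric] cong_iff_dvd_diff d_def by simp
  finally show ?thesis .
qed

lemma append_in_L_cong_iff:
  assumes "u \<in> L p q" "u \<noteq> []" "v \<in> L p q" "v \<noteq> []"
    and cong: "[nval p q u = nval p q v] (mod q ^ k)" and "length w \<le> k"
  shows "u @ w \<in> L p q \<longleftrightarrow> v @ w \<in> L p q"
proof -
  have "q ^ length w dvd q ^ k"
    using \<open>length w \<le> k\<close> by (rule le_imp_power_dvd)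
  then have "[nval p q u = nval p q v] (mod q ^ length w)"
    using cong by (rule cong_dvd_modulus_nat[rotated])
  then show ?thesis
    using append_in_L_iff_cong[OF assms(1-4)] append_in_L_iff_cong[OF assms(3,4,1,2)] cong_sym
    by blast
qed

end

lemma extends_factor_iff: "extends h U (factor p q x u (Suc h)) \<longleftrightarrow> factor p q x u h = U"
proof -
  have "(\<lambda>z. if length z \<le> h then factor p q x u (Suc h) z else None) = factor p q x u h"
    by (auto simp: factor_def)
  then show ?thesis
    by (simp add: extends_def)
qed

lemma F_inf_realised_by_nonempty_word:
  assumes "U \<in> F_inf p q x k"
  shows "\<exists>u\<in>L p q. u \<noteq> [] \<and> factor p q x u k = U"
proof -
  have "infinite ({w \<in> L p q. factor p q x w k = U} - {[]})"
    using assms by (simp add: F_inf_def)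
  then obtain u where "u \<in> {w \<in> L p q. factor p q x w k = U} - {[]}"
    by (metis ex_in_conv finite.emptyI)
  then show ?thesis
    by blast
qed

lemma F_inf_letter_least_word:
  assumes "U \<in> F_inf_letter p q x (Suc h) a"
  obtains y where "length y = h" "U (y @ [a]) \<noteq> None"
    "\<And>z. U z \<noteq> None \<Longrightarrow> length z = Suc h \<Longrightarrow> radix_le (y @ [a]) z"
proof -
  obtain z where z: "U z \<noteq> None" "length z = Suc h" "z \<noteq> []" "last z = a"
    and least: "\<And>z'. U z' \<noteq> None \<Longrightarrow> length z' = Suc h \<Longrightarrow> radix_le z z'"
    using assms unfolding F_inf_letter_def by blast
  have "z = butlast z @ [a]"
    using z(3,4) by (metis append_butlast_last_id)
  with z least show thesis
    by (intro that[of "butlast z"]) simp_all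
qed

lemma F_inf_letter_subset: "F_inf_letter p q x h a \<subseteq> F_inf p q x h"
  by (auto simp: F_inf_letter_def)

lemma radix_le_snoc_imp_lexordp_eq:
  assumes "length y = length y'" "radix_le (y @ [a]) (y' @ [b])"
  shows "lexordp_eq y y'"
proof (cases "y = y'")
  case False
  then have "(y @ [a], y' @ [b]) \<in> lexord {(c, d). c < d}"
    using assms by (auto simp: radix_le_def)
  then have "(y, y') \<in> lexord {(c, d). c < d}"
    using False assms(1) by (rule lexord_sufE) simp
  then show ?thesis
    by (simp add: lexordp_eq_conv_lexord lexordp_conv_lexord)
qed (simp add: lexordp_eq_refl)

context rational_base
begin

lemma factor_eq_None_iff: "factor p q x u k z = None \<longleftrightarrow> u @ z \<notin> L p q \<or> k < length z"
  by (auto simp: factor_def L_iff normal_word_def)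

lemma factor_Some:
  "u @ z \<in> L p q \<Longrightarrow> length z \<le> k \<Longrightarrow> factor p q x u k z = Some (x (nval p q (u @ z)))"
  by (simp add: factor_def L_iff normal_word_def)

lemma generated_by_nval:
  "generated_by p q x Q q0 \<delta> \<tau> \<Longrightarrow> w \<in> L p q \<Longrightarrow> x (nval p q w) = \<tau> (delta_star \<delta> q0 w)"
  by (simp add: generated_by_def rep_nval)

lemma least_word_prefix_le:
  assumes agree: "factor p q x u h = factor p q x v h"
    and least: "\<And>z. factor p q x u (Suc h) z \<noteq> None \<Longrightarrow> length z = Suc h \<Longrightarrow> radix_le (y @ [a]) z"
    and "length y = h" "length y' = h" "v @ y' @ [b] \<in> L p q"
  shows "lexordp_eq y y'"
proof -
  have "v @ y' \<in> L p q"
    using L_prefix_closed[of "v @ y'" "[b]"] assms(5) by simp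
  then have "factor p q x v h y' \<noteq> None"
    using assms(4) by (simp add: factor_eq_None_iff)
  then have "factor p q x u h y' \<noteq> None"
    using agree by simp
  then have "u @ y' \<in> L p q"
    by (simp add: factor_eq_None_iff)
  then obtain c where "u @ y' @ [c] \<in> L p q"
    using L_snoc_exists by fastforce
  then have "radix_le (y @ [a]) (y' @ [c])"
    using least assms(4) by (simp add: factor_eq_None_iff)
  then show ?thesis
    using radix_le_snoc_imp_lexordp_eq assms(3,4) by simp
qed

lemma F_inf_letter_common_extension:
  assumes "factor p q x u (Suc h) \<in> F_inf_letter p q x (Suc h) a"
    and "factor p q x v (Suc h) \<in> F_inf_letter p q x (Suc h) a"
    and agree: "factor p q x u h = factor p q x v h"
  shows "\<exists>z. length z = Suc h \<and> u @ z \<in> L p q \<and> v @ z \<in> L p q"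
proof -
  obtain y where y: "length y = h" "factor p q x u (Suc h) (y @ [a]) \<noteq> None"
    and least_u: "\<And>z. factor p q x u (Suc h) z \<noteq> None \<Longrightarrow> length z = Suc h \<Longrightarrow> radix_le (y @ [a]) z"
    using F_inf_letter_least_word[OF assms(1)] by blast
  obtain y' where y': "length y' = h" "factor p q x v (Suc h) (y' @ [a]) \<noteq> None"
    and least_v: "\<And>z. factor p q x v (Suc h) z \<noteq> None \<Longrightarrow> length z = Suc h \<Longrightarrow> radix_le (y' @ [a]) z"
    using F_inf_letter_least_word[OF assms(2)] by blast
  have uy: "u @ y @ [a] \<in> L p q" and vy': "v @ y' @ [a] \<in> L p q"
    using y(2) y'(2) by (simp_all add: factor_eq_None_iff)
  have "lexordp_eq y y'"
    using agree least_u y(1) y'(1) vy' by (rule least_word_prefix_le)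
  moreover have "lexordp_eq y' y"
    using agree[symmetric] least_v y'(1) y(1) uy by (rule least_word_prefix_le)
  ultimately have "y = y'"
    by (rule lexordp_eq_antisym)
  then show ?thesis
    using y(1) uy vy' by (intro exI[of _ "y @ [a]"]) simp
qed

lemma factor_eq_if_same_state:
  assumes gen: "generated_by p q x Q q0 \<delta> \<tau>"
    and u: "u \<in> L p q" "u \<noteq> []" and v: "v \<in> L p q" "v \<noteq> []"
    and cong: "[nval p q u = nval p q v] (mod q ^ k)"
    and state: "delta_star \<delta> q0 u = delta_star \<delta> q0 v"
  shows "factor p q x u k = factor p q x v k"
proof
  fix w
  show "factor p q x u k w = factor p q x v k w"
  proof (cases "length w \<le> k")
    case True
    then have same_dom: "u @ w \<in> L p q \<longleftrightarrow> v @ w \<in> L p q"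
      using append_in_L_cong_iff[OF u v cong] by blast
    have "delta_star \<delta> q0 (u @ w) = delta_star \<delta> q0 (v @ w)"
      using state by (simp add: delta_star_def)
    then show ?thesis
      using True same_dom generated_by_nval[OF gen] by (auto simp: factor_Some factor_def)
  qed (simp add: factor_def)
qed

lemma same_state_if_factors_agree:
  assumes separating: "\<forall>u\<in>L p q. \<forall>v\<in>L p q.
           (\<exists>k::int. val p q u - val p q v = of_int k * of_nat (q ^ h)) \<and>
           delta_star \<delta> q0 u \<noteq> delta_star \<delta> q0 v \<longrightarrow>
           (\<exists>w. u @ w \<in> L p q \<and> set w \<subseteq> alph p \<and> length w \<le> h \<and>
                \<tau> (delta_star \<delta> q0 (u @ w)) \<noteq> \<tau> (delta_star \<delta> q0 (v @ w)))"
    and gen: "generated_by p q x Q q0 \<delta> \<tau>"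
    and u: "u \<in> L p q" "u \<noteq> []" and v: "v \<in> L p q" "v \<noteq> []"
    and cong: "[nval p q u = nval p q v] (mod q ^ h)"
    and agree: "factor p q x u h = factor p q x v h"
  shows "delta_star \<delta> q0 u = delta_star \<delta> q0 v"
proof (rule ccontr)
  assume "delta_star \<delta> q0 u \<noteq> delta_star \<delta> q0 v"
  moreover have "\<exists>k::int. val p q u - val p q v = of_int k * of_nat (q ^ h)"
  proof -
    obtain k where "int (nval p q u) - int (nval p q v) = int (q ^ h) * k"
      using cong by (auto simp: cong_iff_dvd_diff elim!: dvdE simp flip: cong_int_iff)
    then have "val p q u - val p q v = of_int k * of_nat (q ^ h)"
      using val_eq_nval[OF u(1)] val_eq_nval[OF v(1)]
      by (metis mult.commute of_int_diff of_int_mult of_int_of_nat_eq)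
    then show ?thesis ..
  qed
  ultimately obtain w where w: "u @ w \<in> L p q" "length w \<le> h"
      "\<tau> (delta_star \<delta> q0 (u @ w)) \<noteq> \<tau> (delta_star \<delta> q0 (v @ w))"
    using separating u(1) v(1) by blast
  have vw: "v @ w \<in> L p q"
    using append_in_L_cong_iff[OF u v cong w(2)] w(1) by simp
  have "x (nval p q (u @ w)) = x (nval p q (v @ w))"
    using fun_cong[OF agree, of w] w(1,2) vw by (simp add: factor_Some)
  then show False
    using w(3) generated_by_nval[OF gen] w(1) vw by simp
qed

end

theorem mainTheorem11:
  fixes p q h :: nat
    and x :: "nat \<Rightarrow> 'b" and B :: "'b set"
    and Q :: "'s set" and q0 :: 's and \<delta> :: "'s \<Rightarrow> nat \<Rightarrow> 's" and \<tau> :: "'s \<Rightarrow> 'b"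
  assumes "p > q" and "q > 1" and "coprime p q"
    and "finite B" and "\<tau> ` Q \<subseteq> B"
    and "generated_by p q x Q q0 \<delta> \<tau>"
    and "\<forall>u\<in>L p q. \<forall>v\<in>L p q.
           (\<exists>k::int. val p q u - val p q v = of_int k * of_nat (q ^ h)) \<and>
           delta_star \<delta> q0 u \<noteq> delta_star \<delta> q0 v \<longrightarrow>
           (\<exists>w. u @ w \<in> L p q \<and> set w \<subseteq> alph p \<and> length w \<le> h \<and>
                \<tau> (delta_star \<delta> q0 (u @ w)) \<noteq> \<tau> (delta_star \<delta> q0 (v @ w)))"
  shows "\<forall>j<q. \<forall>U\<in>F_inf p q x h. \<forall>U1\<in>F_inf_letter p q x (Suc h) (sigfirst p q j).
           \<forall>U2\<in>F_inf_letter p q x (Suc h) (sigfirst p q j).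
             extends h U U1 \<and> extends h U U2 \<longrightarrow> U1 = U2"
proof (intro allI impI ballI)
  interpret rational_base p q
    using assms(1-3) by unfold_locales
  fix j U U1 U2
  assume U1: "U1 \<in> F_inf_letter p q x (Suc h) (sigfirst p q j)"
    and U2: "U2 \<in> F_inf_letter p q x (Suc h) (sigfirst p q j)"
    and extends: "extends h U U1 \<and> extends h U U2"
  obtain u where u: "u \<in> L p q" "u \<noteq> []" "factor p q x u (Suc h) = U1"
    using F_inf_realised_by_nonempty_word[OF subsetD[OF F_inf_letter_subset U1]] by blast
  obtain v where v: "v \<in> L p q" "v \<noteq> []" "factor p q x v (Suc h) = U2"
    using F_inf_realised_by_nonempty_word[OF subsetD[OF F_inf_letter_subset U2]] by blast
  have agree: "factor p q x u h = factor p q x v h"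
    using extends unfolding u(3)[symmetric] v(3)[symmetric] extends_factor_iff by simp
  obtain z where z: "length z = Suc h" "u @ z \<in> L p q" "v @ z \<in> L p q"
    using F_inf_letter_common_extension[OF U1[folded u(3)] U2[folded v(3)] agree] by blast
  have cong: "[nval p q u = nval p q v] (mod q ^ Suc h)"
    using append_in_L_iff_cong[OF u(1,2) v(1,2) z(2)] z by simp
  then have "[nval p q u = nval p q v] (mod q ^ h)"
    by (rule cong_dvd_modulus_nat) (simp add: le_imp_power_dvd)
  then have "delta_star \<delta> q0 u = delta_star \<delta> q0 v"
    by (rule same_state_if_factors_agree[OF assms(7,6) u(1,2) v(1,2) _ agree])
  then show "U1 = U2"
    using factor_eq_if_same_state[OF assms(6) u(1,2) v(1,2) cong] u(3) v(3) by simp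
qed

end
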